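(* Let $\mathcal I$ be an ideal on $\mathbb N$ with the Baire property, and let $\sum_n x_n$ be a series in a Banach space $X$. Then $\sum_n x_n$ is unconditionally convergent if and only if the set $$B(\mathcal I,(x_n)):=\left\{t \in \{-1,1\}^{\mathbb N} \colon \sum_n t(n)x_n \text{ is } \mathcal I\text{-convergent}\right\}$$ is nonmeager in $\{-1,1\}^{\mathbb N}$ (with the product topology).
   Context: $\mathbb N=\{1,2,\dots\}$. An ideal on $\mathbb N$ is a family $\mathcal I\subset\mathcal P(\mathbb N)$ closed under finite unions and subsets, with $\mathbb N\notin\mathcal I$ and containing all finite subsets of $\mathbb N$. Identifying subsets of $\mathbb N$ with their characteristic functions, $\mathcal I$ is regarded as a subset of the Cantor space $\{0,1\}^{\mathbb N}$ (product topology), and "$\mathcal I$ has the Baire property" refers to this subset. A sequence $(y_n)$ in a normed space is $\mathcal I$-convergent to $y$ if $\{n:\|y_n-y\|>\varepsilon\}\in\mathcal I$ for every $\varepsilon>0$; a series is $\mathcal I$-convergent if its sequence of partial sums is $\mathcal I$-convergent to some element. A series $\sum_n x_n$ is unconditionally convergent if $\sum_n x_{p(n)}$ converges for every permutation $p$ of $\mathbb N$. Banach spaces are over $\mathbb R$. *)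

theory Defs
  imports "HOL-Analysis.Analysis"
begin

text \<open>Natural numbers N = {1,2,...} are represented by the type nat, shifted by one
  (index n of the paper corresponds to n-1 here).\<close>

definition is_ideal :: "nat set set \<Rightarrow> bool" where
  "is_ideal I \<longleftrightarrow>
     (\<forall>A\<in>I. \<forall>B\<in>I. A \<union> B \<in> I) \<and>
     (\<forall>A\<in>I. \<forall>B. B \<subseteq> A \<longrightarrow> B \<in> I) \<and>
     UNIV \<notin> I \<and>
     (\<forall>F. finite F \<longrightarrow> F \<in> I)"

definition char_fun :: "nat set \<Rightarrow> (nat \<Rightarrow> bool)" where
  "char_fun A = (\<lambda>n. n \<in> A)"

definition nowhere_dense :: "'a::topological_space set \<Rightarrow> bool" where
  "nowhere_dense A \<longleftrightarrow> interior (closure A) = {}"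

definition meager :: "'a::topological_space set \<Rightarrow> bool" where
  "meager A \<longleftrightarrow> (\<exists>F :: nat \<Rightarrow> 'a set. (\<forall>n. nowhere_dense (F n)) \<and> A \<subseteq> (\<Union>n. F n))"

definition baire_property :: "'a::topological_space set \<Rightarrow> bool" where
  "baire_property A \<longleftrightarrow> (\<exists>U. open U \<and> meager ((A - U) \<union> (U - A)))"

definition I_convergent :: "nat set set \<Rightarrow> (nat \<Rightarrow> 'a::real_normed_vector) \<Rightarrow> 'a \<Rightarrow> bool" where
  "I_convergent I y L \<longleftrightarrow> (\<forall>\<epsilon>>0. {n. norm (y n - L) > \<epsilon>} \<in> I)"

definition I_series_convergent :: "nat set set \<Rightarrow> (nat \<Rightarrow> 'a::real_normed_vector) \<Rightarrow> bool" where
  "I_series_convergent I x \<longleftrightarrow> (\<exists>L. I_convergent I (\<lambda>n. \<Sum>i\<le>n. x i) L)"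

definition unconditionally_convergent :: "(nat \<Rightarrow> 'a::real_normed_vector) \<Rightarrow> bool" where
  "unconditionally_convergent x \<longleftrightarrow> (\<forall>p. bij p \<longrightarrow> summable (\<lambda>n. x (p n)))"

text \<open>Sign sequences t in {-1,1}^N are encoded by nat => bool (True = 1, False = -1);
  this is a homeomorphism of the product spaces.\<close>
definition sgn_val :: "bool \<Rightarrow> real" where
  "sgn_val b = (if b then 1 else -1)"

definition B_set :: "nat set set \<Rightarrow> (nat \<Rightarrow> 'a::real_normed_vector) \<Rightarrow> (nat \<Rightarrow> bool) set" where
  "B_set I x = {t. I_series_convergent I (\<lambda>n. sgn_val (t n) *\<^sub>R x n)}"

end

theory Submission
  imports Defs
begin

text \<open>
  If \<open>\<Sum> x\<^sub>n\<close> converges unconditionally, it satisfies the Cauchy criterion for finite sets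
  of indices, hence so does every signed series \<open>\<Sum> t(n) x\<^sub>n\<close>. All of them converge, so
  \<open>B(\<I>, (x\<^sub>n))\<close> is the whole Cantor space, which is not meager by the Baire category theorem.

  Conversely, an ideal with the Baire property is meager, by a zero-one law: it is invariant
  under finite modifications and disjoint from its image under complementation. Talagrand's
  characterisation then gives intervals \<open>[n\<^sub>k, n\<^sub>k\<^sub>+\<^sub>1)\<close> such that every set of the
  ideal contains only finitely many of them. If the series is not unconditionally convergent,
  there are \<open>\<epsilon> > 0\<close> and arbitrarily late finite sets \<open>F\<close> with \<open>\<parallel>\<Sum>\<^sub>F x\<parallel> \<ge> \<epsilon>\<close>. For
  \<open>t \<in> B\<close>, \<open>\<I>\<close>-convergence yields an index \<open>a\<close> such that the partial sums return to within
  \<open>\<epsilon>/2\<close> of the \<open>a\<close>-th one in almost every interval. For fixed \<open>a\<close> and a fixed starting interval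
  these \<open>t\<close> form a nowhere dense set: any finite prefix extends by giving a late block \<open>F\<close> one
  common sign, which moves the partial sum \<open>\<epsilon>\<close> away from the \<open>a\<close>-th one, and then choosing
  each further sign so that this distance never decreases. Hence \<open>B\<close> is meager.
\<close>

section \<open>Meager sets\<close>

lemma nowhere_dense_empty [simp]: "nowhere_dense {}"
  by (simp add: nowhere_dense_def)

lemma nowhere_dense_Un:
  assumes "nowhere_dense S" "nowhere_dense T"
  shows "nowhere_dense (S \<union> T)"
  using assms interior_closed_Un_empty_interior[of "closure S" "closure T"]
  by (simp add: nowhere_dense_def)

lemma nowhere_dense_finite_UN:
  "finite A \<Longrightarrow> (\<And>a. a \<in> A \<Longrightarrow> nowhere_dense (S a)) \<Longrightarrow> nowhere_dense (\<Union>a\<in>A. S a)"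
  by (induction A rule: finite_induct) (auto intro: nowhere_dense_Un)

lemma meager_subset: "meager S \<Longrightarrow> T \<subseteq> S \<Longrightarrow> meager T"
  unfolding meager_def by blast

lemma nowhere_dense_imp_meager: "nowhere_dense S \<Longrightarrow> meager S"
  unfolding meager_def by (intro exI[of _ "\<lambda>_. S"]) simp

lemma meager_countable_UN:
  assumes "countable A" and "\<And>a. a \<in> A \<Longrightarrow> meager (S a)"
  shows "meager (\<Union>a\<in>A. S a)"
proof (cases "A = {}")
  case True
  then show ?thesis
    unfolding meager_def by (intro exI[of _ "\<lambda>_. {}"]) simp
next
  case False
  have "\<forall>a\<in>A. \<exists>F::nat \<Rightarrow> _. (\<forall>n. nowhere_dense (F n)) \<and> S a \<subseteq> (\<Union>n. F n)"
    using assms(2) unfolding meager_def by blast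
  then obtain F :: "_ \<Rightarrow> nat \<Rightarrow> _" where F: "\<forall>a\<in>A. (\<forall>n. nowhere_dense (F a n)) \<and> S a \<subseteq> (\<Union>n. F a n)"
    by (rule bchoice[THEN exE]) blast
  define G where "G k = F (from_nat_into A (fst (prod_decode k))) (snd (prod_decode k))" for k
  have "nowhere_dense (G k)" for k
    unfolding G_def using F from_nat_into[OF False] by simp
  moreover have "S a \<subseteq> (\<Union>k. G k)" if a: "a \<in> A" for a
  proof
    fix y assume "y \<in> S a"
    then obtain n where "y \<in> F a n"
      using F a by blast
    then have "y \<in> G (prod_encode (to_nat_on A a, n))"
      unfolding G_def using assms(1) a by simp
    then show "y \<in> (\<Union>k. G k)" by blast
  qed
  ultimately show ?thesis
    unfolding meager_def by (intro exI[of _ G]) blast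
qed

lemma compact_Hausdorff_not_meager_UNIV:
  assumes "compact_space (euclidean :: 'a::topological_space topology)"
    and "Hausdorff_space (euclidean :: 'a topology)"
  shows "\<not> meager (UNIV :: 'a set)"
proof
  assume "meager (UNIV :: 'a set)"
  then obtain F :: "nat \<Rightarrow> 'a set" where F: "\<And>n. nowhere_dense (F n)" "UNIV \<subseteq> (\<Union>n. F n)"
    unfolding meager_def by blast
  have "locally_compact_space (euclidean :: 'a topology) \<and> regular_space (euclidean :: 'a topology)"
    using assms by (simp add: compact_imp_locally_compact_space compact_Hausdorff_imp_regular_space)
  then have "euclidean interior_of \<Union>(range (\<lambda>n. closure (F n))) = {}"
  proof (intro Baire_category_alt disjI2)
    show "closedin euclidean T \<and> euclidean interior_of T = {}" if "T \<in> range (\<lambda>n. closure (F n))" for T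
      using that F(1) by (auto simp: nowhere_dense_def)
  qed simp_all
  moreover have "(\<Union>n. closure (F n)) = UNIV"
    using F(2) closure_subset by blast
  ultimately show False by simp
qed

lemma cantor_space_compact_Hausdorff:
  shows "compact_space (euclidean :: (nat \<Rightarrow> bool) topology)"
    and "Hausdorff_space (euclidean :: (nat \<Rightarrow> bool) topology)"
proof -
  have "Hausdorff_space (euclidean :: bool topology)"
    unfolding Hausdorff_space_def
  proof (intro allI impI)
    fix x y :: bool
    assume "x \<in> topspace euclidean \<and> y \<in> topspace euclidean \<and> x \<noteq> y"
    then show "\<exists>U V. openin euclidean U \<and> openin euclidean V \<and> x \<in> U \<and> y \<in> V \<and> disjnt U V"
      by (intro exI[of _ "{x}"] exI[of _ "{y}"]) (simp add: open_discrete disjnt_def)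
  qed
  moreover have "compact_space (euclidean :: bool topology)"
    by (simp add: compact_space_def finite_imp_compact)
  ultimately show "compact_space (euclidean :: (nat \<Rightarrow> bool) topology)"
    and "Hausdorff_space (euclidean :: (nat \<Rightarrow> bool) topology)"
    unfolding euclidean_product_topology[symmetric]
    by (simp_all add: compact_space_product_topology Hausdorff_space_product_topology)
qed

section \<open>The Cantor space\<close>

definition cylinder :: "(nat \<Rightarrow> bool) \<Rightarrow> nat \<Rightarrow> (nat \<Rightarrow> bool) set" where
  "cylinder s N = {g. \<forall>i<N. g i = s i}"

lemma cylinder_self [simp]: "s \<in> cylinder s N"
  by (simp add: cylinder_def)

lemma cylinder_subset: "N \<le> M \<Longrightarrow> \<forall>i<N. t i = s i \<Longrightarrow> cylinder t M \<subseteq> cylinder s N"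
  by (auto simp: cylinder_def)

lemma open_cylinder: "open (cylinder s N)"
proof -
  have "open {g::nat \<Rightarrow> bool. \<forall>i\<in>{..<N}. g (id i) \<in> {s i}}"
    by (rule product_topology_basis') (auto intro: open_discrete)
  moreover have "{g::nat \<Rightarrow> bool. \<forall>i\<in>{..<N}. g (id i) \<in> {s i}} = cylinder s N"
    by (auto simp: cylinder_def)
  ultimately show ?thesis by simp
qed

lemma open_contains_cylinder:
  fixes U :: "(nat \<Rightarrow> bool) set"
  assumes "open U" "g \<in> U"
  shows "\<exists>N. cylinder g N \<subseteq> U"
proof -
  have "openin (product_topology (\<lambda>_. euclidean) UNIV) U"
    using assms(1) by (simp add: open_fun_def)
  from product_topology_open_contains_basis[OF this assms(2)]
  obtain X :: "nat \<Rightarrow> bool set" where X: "g \<in> Pi\<^sub>E UNIV X"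
    "finite {i. X i \<noteq> topspace euclidean}" "Pi\<^sub>E UNIV X \<subseteq> U"
    by blast
  obtain N where N: "{i. X i \<noteq> UNIV} \<subseteq> {..<N}"
    using X(2) finite_nat_bounded by auto
  have "cylinder g N \<subseteq> Pi\<^sub>E UNIV X"
  proof
    fix h assume h: "h \<in> cylinder g N"
    have "h i \<in> X i" for i
      using X(1) N h by (cases "X i = UNIV") (auto simp: cylinder_def PiE_iff)
    then show "h \<in> Pi\<^sub>E UNIV X" by (simp add: PiE_iff)
  qed
  then show ?thesis using X(3) by blast
qed

lemma nowhere_dense_cantor_iff:
  "nowhere_dense S \<longleftrightarrow> (\<forall>s N. \<exists>t M. N < M \<and> (\<forall>i<N. t i = s i) \<and> cylinder t M \<inter> S = {})"
proof
  assume S: "nowhere_dense S"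
  show "\<forall>s N. \<exists>t M. N < M \<and> (\<forall>i<N. t i = s i) \<and> cylinder t M \<inter> S = {}"
  proof (intro allI)
    fix s N
    have "\<not> cylinder s N \<subseteq> closure S"
    proof
      assume "cylinder s N \<subseteq> closure S"
      then have "cylinder s N \<subseteq> interior (closure S)"
        by (simp add: interior_maximal open_cylinder)
      then have "s \<in> interior (closure S)"
        using cylinder_self by blast
      then show False
        using S by (simp add: nowhere_dense_def)
    qed
    then obtain t where t: "t \<in> cylinder s N" "t \<notin> closure S" by blast
    have "open (cylinder s N - closure S)"
      by (intro open_Diff open_cylinder closed_closure)
    then obtain M where M: "cylinder t M \<subseteq> cylinder s N - closure S"
      using open_contains_cylinder t by blast
    have "cylinder t (max M (Suc N)) \<subseteq> cylinder t M"
      by (rule cylinder_subset) auto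
    then have "cylinder t (max M (Suc N)) \<inter> S = {}"
      using M closure_subset by blast
    moreover have "\<forall>i<N. t i = s i"
      using t by (simp add: cylinder_def)
    ultimately show "\<exists>t M. N < M \<and> (\<forall>i<N. t i = s i) \<and> cylinder t M \<inter> S = {}"
      by (intro exI[of _ t] exI[of _ "max M (Suc N)"]) simp
  qed
next
  assume S: "\<forall>s N. \<exists>t M. N < M \<and> (\<forall>i<N. t i = s i) \<and> cylinder t M \<inter> S = {}"
  show "nowhere_dense S"
    unfolding nowhere_dense_def
  proof (rule ccontr)
    assume "interior (closure S) \<noteq> {}"
    then obtain s where "s \<in> interior (closure S)" by blast
    then obtain N where N: "cylinder s N \<subseteq> interior (closure S)"
      using open_contains_cylinder[OF open_interior] by blast
    obtain t M where tM: "N < M" "\<forall>i<N. t i = s i" "cylinder t M \<inter> S = {}"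
      using S by (elim allE[of _ s] allE[of _ N] exE) blast
    have "cylinder t M \<subseteq> cylinder s N"
      using tM by (intro cylinder_subset) auto
    then have "t \<in> closure S"
      using N interior_subset cylinder_self[of t M] by blast
    moreover have "cylinder t M \<inter> closure S = {}"
      using tM(3) open_cylinder by (simp add: open_Int_closure_eq_empty)
    ultimately show False
      using cylinder_self[of t M] by blast
  qed
qed

definition toggle :: "nat set \<Rightarrow> (nat \<Rightarrow> bool) \<Rightarrow> nat \<Rightarrow> bool" where
  "toggle D g = (\<lambda>i. if i \<in> D then \<not> g i else g i)"

lemma toggle_toggle [simp]: "toggle D (toggle D g) = g"
  by (auto simp: toggle_def)

lemma toggle_in_cylinder_iff: "toggle D g \<in> cylinder (toggle D t) M \<longleftrightarrow> g \<in> cylinder t M"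
  by (auto simp: toggle_def cylinder_def)

lemma nowhere_dense_toggle:
  assumes "nowhere_dense S"
  shows "nowhere_dense (toggle D ` S)"
  unfolding nowhere_dense_cantor_iff
proof (intro allI)
  fix s N
  obtain t M where tM: "N < M" "\<forall>i<N. t i = toggle D s i" "cylinder t M \<inter> S = {}"
    using assms unfolding nowhere_dense_cantor_iff by (elim allE[of _ "toggle D s"] allE[of _ N] exE) blast
  have "cylinder (toggle D t) M \<inter> toggle D ` S = {}"
    using tM(3) toggle_in_cylinder_iff[of D _ t M] by auto
  moreover have "\<forall>i<N. toggle D t i = s i"
    using tM(2) by (auto simp: toggle_def)
  ultimately show "\<exists>t M. N < M \<and> (\<forall>i<N. t i = s i) \<and> cylinder t M \<inter> toggle D ` S = {}"
    using tM(1) by blast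
qed

lemma meager_toggle:
  assumes "meager S"
  shows "meager (toggle D ` S)"
proof -
  obtain F :: "nat \<Rightarrow> _" where F: "\<And>n. nowhere_dense (F n)" "S \<subseteq> (\<Union>n. F n)"
    using assms unfolding meager_def by blast
  have "nowhere_dense (toggle D ` F n)" for n
    using F(1) by (rule nowhere_dense_toggle)
  moreover have "toggle D ` S \<subseteq> (\<Union>n. toggle D ` F n)"
    using F(2) by blast
  ultimately show ?thesis
    unfolding meager_def by (intro exI[of _ "\<lambda>n. toggle D ` F n"]) blast
qed

text \<open>A zero-one law: finitely many toggles carry the cylinder onto every cylinder of the same length.\<close>

lemma meager_of_meager_in_cylinder:
  assumes toggle_closed: "\<And>D g. finite D \<Longrightarrow> g \<in> T \<Longrightarrow> toggle D g \<in> T"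
    and "meager (cylinder s N \<inter> T)"
  shows "meager T"
proof -
  have "T \<subseteq> (\<Union>D\<in>Pow {..<N}. toggle D ` (cylinder s N \<inter> T))"
  proof
    fix g assume g: "g \<in> T"
    define D where "D = {i. i < N \<and> g i \<noteq> s i}"
    have "finite D" "D \<in> Pow {..<N}"
      by (auto simp: D_def)
    moreover have "toggle D g \<in> cylinder s N \<inter> T"
      using g toggle_closed[OF \<open>finite D\<close> g] by (auto simp: D_def cylinder_def toggle_def)
    then have "g \<in> toggle D ` (cylinder s N \<inter> T)"
      by (metis image_eqI toggle_toggle)
    ultimately show "g \<in> (\<Union>D\<in>Pow {..<N}. toggle D ` (cylinder s N \<inter> T))"
      by blast
  qed
  moreover have "meager (\<Union>D\<in>Pow {..<N}. toggle D ` (cylinder s N \<inter> T))"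
    using assms(2) by (intro meager_countable_UN meager_toggle) (simp_all add: countable_finite)
  ultimately show ?thesis
    using meager_subset by blast
qed

section \<open>Meager ideals\<close>

lemma ideal_subset: "is_ideal I \<Longrightarrow> A \<in> I \<Longrightarrow> B \<subseteq> A \<Longrightarrow> B \<in> I"
  unfolding is_ideal_def by blast

lemma ideal_Un: "is_ideal I \<Longrightarrow> A \<in> I \<Longrightarrow> B \<in> I \<Longrightarrow> A \<union> B \<in> I"
  unfolding is_ideal_def by blast

lemma ideal_finite: "is_ideal I \<Longrightarrow> finite A \<Longrightarrow> A \<in> I"
  unfolding is_ideal_def by blast

lemma ideal_UNIV: "is_ideal I \<Longrightarrow> UNIV \<notin> I"
  unfolding is_ideal_def by blast

lemma char_fun_inject [simp]: "char_fun A = char_fun B \<longleftrightarrow> A = B"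
  by (auto simp: char_fun_def fun_eq_iff)

lemma toggle_char_fun: "toggle D (char_fun A) = char_fun ((A - D) \<union> (D - A))"
  by (auto simp: toggle_def char_fun_def)

lemma toggle_finite_char_fun_ideal:
  assumes "is_ideal I" "finite D" "g \<in> char_fun ` I"
  shows "toggle D g \<in> char_fun ` I"
proof -
  obtain A where A: "A \<in> I" "g = char_fun A"
    using assms(3) by blast
  have "A \<union> D \<in> I"
    using assms(1,2) A(1) by (simp add: ideal_Un ideal_finite)
  then have "(A - D) \<union> (D - A) \<in> I"
    by (rule ideal_subset[OF assms(1)]) blast
  then show ?thesis
    using A(2) by (simp add: toggle_char_fun)
qed

lemma char_fun_ideal_subset_toggle_Compl:
  assumes "is_ideal I"
  shows "char_fun ` I \<subseteq> toggle UNIV ` (- char_fun ` I)"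
proof
  fix g assume "g \<in> char_fun ` I"
  then obtain A where A: "A \<in> I" "g = char_fun A"
    by blast
  have "toggle UNIV g \<notin> char_fun ` I"
  proof
    assume "toggle UNIV g \<in> char_fun ` I"
    then have "- A \<in> I"
      using A(2) by (auto simp: toggle_char_fun Compl_eq_Diff_UNIV)
    then have "UNIV \<in> I"
      using ideal_Un[OF assms A(1)] by (metis Compl_partition)
    then show False
      using ideal_UNIV[OF assms] by blast
  qed
  then show "g \<in> toggle UNIV ` (- char_fun ` I)"
    by (metis ComplI image_eqI toggle_toggle)
qed

lemma meager_ideal_if_baire_property:
  assumes "is_ideal I" "baire_property (char_fun ` I)"
  shows "meager (char_fun ` I)"
proof -
  let ?J = "char_fun ` I"
  obtain U where U: "open U" "meager ((?J - U) \<union> (U - ?J))"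
    using assms(2) unfolding baire_property_def by blast
  show ?thesis
  proof (cases "U = {}")
    case True
    then show ?thesis
      using U(2) by simp
  next
    case False
    then obtain g where "g \<in> U"
      by blast
    then obtain N where "cylinder g N \<subseteq> U"
      using open_contains_cylinder[OF U(1)] by blast
    have "meager (- ?J)"
    proof (rule meager_of_meager_in_cylinder)
      show "meager (cylinder g N \<inter> - ?J)"
        using \<open>cylinder g N \<subseteq> U\<close> by (intro meager_subset[OF U(2)]) blast
      show "toggle D h \<in> - ?J" if "finite D" "h \<in> - ?J" for D h
        using toggle_finite_char_fun_ideal[OF assms(1) \<open>finite D\<close>, of "toggle D h"] that by auto
    qed
    then show ?thesis
      using meager_subset[OF meager_toggle char_fun_ideal_subset_toggle_Compl[OF assms(1)]] by blast
  qed
qed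

lemma nowhere_dense_avoids_extensions:
  assumes "nowhere_dense S"
  shows "\<exists>u M. N < M \<and> (\<forall>s. cylinder (override_on u s {..<N}) M \<inter> S = {})"
proof -
  have "\<exists>u M. N < M \<and> (\<forall>s\<in>P. cylinder (override_on u s {..<N}) M \<inter> S = {})" if "finite P" for P
    using that
  proof (induction P rule: finite_induct)
    case empty
    show ?case by blast
  next
    case (insert s P)
    then obtain u M where uM: "N < M" "\<forall>s\<in>P. cylinder (override_on u s {..<N}) M \<inter> S = {}"
      by blast
    obtain t M' where t: "M < M'" "\<forall>i<M. t i = override_on u s {..<N} i" "cylinder t M' \<inter> S = {}"
      using assms unfolding nowhere_dense_cantor_iff
      by (elim allE[of _ "override_on u s {..<N}"] allE[of _ M] exE) blast
    have "override_on t s {..<N} = t"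
      using t(2) uM(1) by (auto simp: override_on_def fun_eq_iff)
    then have "cylinder (override_on t s {..<N}) M' \<inter> S = {}"
      using t(3) by simp
    moreover have "cylinder (override_on t s' {..<N}) M' \<inter> S = {}" if "s' \<in> P" for s'
    proof -
      have "cylinder (override_on t s' {..<N}) M' \<subseteq> cylinder (override_on u s' {..<N}) M"
        using t(1,2) by (intro cylinder_subset) (auto simp: override_on_def)
      then show ?thesis
        using uM(2) that by blast
    qed
    ultimately show ?case
      using uM(1) t(1) by (intro exI[of _ t] exI[of _ M']) auto
  qed
  then obtain u M where uM: "N < M"
    "\<forall>s\<in>char_fun ` Pow {..<N}. cylinder (override_on u s {..<N}) M \<inter> S = {}"
    by blast
  have "cylinder (override_on u s {..<N}) M \<inter> S = {}" for s
  proof -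
    have "override_on u s {..<N} = override_on u (char_fun {i. i < N \<and> s i}) {..<N}"
      by (auto simp: override_on_def char_fun_def fun_eq_iff)
    moreover have "char_fun {i. i < N \<and> s i} \<in> char_fun ` Pow {..<N}"
      by auto
    ultimately show ?thesis
      using uM(2) by auto
  qed
  then show ?thesis
    using uM(1) by blast
qed

lemma nowhere_dense_sequence_avoiding_blocks:
  assumes "\<And>k. nowhere_dense (G k)"
  shows "\<exists>n u. strict_mono n \<and> (\<forall>k s. cylinder (override_on (u k) s {..<n k}) (n (Suc k)) \<inter> G k = {})"
proof -
  define Q where "Q k a b \<longleftrightarrow> a < b \<and>
      (\<exists>u. \<forall>s. cylinder (override_on u s {..<a}) b \<inter> G k = {})" for k a b
  have "\<exists>b. True \<and> Q k a b" for k a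
    using nowhere_dense_avoids_extensions[OF assms[of k], where N = a] by (auto simp: Q_def)
  then have "\<exists>n. \<forall>k. True \<and> Q k (n k) (n (Suc k))"
    by (intro dependent_nat_choice) auto
  then obtain n where n: "\<And>k. n k < n (Suc k)"
    and "\<forall>k. \<exists>u. \<forall>s. cylinder (override_on u s {..<n k}) (n (Suc k)) \<inter> G k = {}"
    unfolding Q_def by blast
  then obtain u where "\<forall>k s. cylinder (override_on (u k) s {..<n k}) (n (Suc k)) \<inter> G k = {}"
    by (metis choice)
  moreover have "strict_mono n"
    using n by (simp add: strict_mono_Suc_iff)
  ultimately show ?thesis
    by blast
qed

lemma strict_mono_interval_unique:
  assumes "strict_mono n" "i \<in> {n k..<n (Suc k)}" "i \<in> {n k'..<n (Suc k')}"
  shows "k = k'"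
proof -
  have "n k < n (Suc k')" "n k' < n (Suc k)"
    using assms(2,3) by auto
  then have "k < Suc k'" "k' < Suc k"
    by (simp_all add: strict_mono_less[OF assms(1)])
  then show ?thesis
    by simp
qed

text \<open>One direction of Talagrand's characterisation of meager ideals.\<close>

lemma meager_hereditary_interval_partition:
  assumes hereditary: "\<And>A B. A \<in> I \<Longrightarrow> B \<subseteq> A \<Longrightarrow> B \<in> I"
    and "meager (char_fun ` I)"
  shows "\<exists>n. strict_mono n \<and> (\<forall>A\<in>I. \<exists>m. \<forall>k\<ge>m. \<not> {n k..<n (Suc k)} \<subseteq> A)"
proof -
  obtain F :: "nat \<Rightarrow> _" where F: "\<And>j. nowhere_dense (F j)" "char_fun ` I \<subseteq> (\<Union>j. F j)"
    using assms(2) unfolding meager_def by blast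
  have "nowhere_dense (\<Union>j\<le>k. F j)" for k
    using F(1) by (intro nowhere_dense_finite_UN) auto
  then obtain n u where n: "strict_mono n"
    and avoid: "\<And>k s. cylinder (override_on (u k) s {..<n k}) (n (Suc k)) \<inter> (\<Union>j\<le>k. F j) = {}"
    using nowhere_dense_sequence_avoiding_blocks[of "\<lambda>k. \<Union>j\<le>k. F j"] by blast
  have "\<exists>m. \<forall>k\<ge>m. \<not> {n k..<n (Suc k)} \<subseteq> A" if A: "A \<in> I" for A
  proof (rule ccontr)
    assume "\<nexists>m. \<forall>k\<ge>m. \<not> {n k..<n (Suc k)} \<subseteq> A"
    then have infinitely_often: "\<forall>m. \<exists>k\<ge>m. {n k..<n (Suc k)} \<subseteq> A"
      by blast
    define K where "K = {k. {n k..<n (Suc k)} \<subseteq> A}"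
    define B where "B = {i. \<exists>k\<in>K. i \<in> {n k..<n (Suc k)} \<and> u k i}"
    have "B \<subseteq> A"
      by (auto simp: B_def K_def)
    then have "B \<in> I"
      by (rule hereditary[OF A])
    then obtain j where j: "char_fun B \<in> F j"
      using F(2) by blast
    obtain k where k: "j \<le> k" "k \<in> K"
      using infinitely_often[rule_format, of j] by (auto simp: K_def)
    have "char_fun B i \<longleftrightarrow> u k i" if i: "i \<in> {n k..<n (Suc k)}" for i
    proof
      assume "char_fun B i"
      then obtain k' where "i \<in> {n k'..<n (Suc k')}" "u k' i"
        by (auto simp: B_def char_fun_def)
      moreover have "k' = k"
        using strict_mono_interval_unique[OF n calculation(1) i] .
      ultimately show "u k i"
        by simp
    next
      assume "u k i"
      then show "char_fun B i"
        using i k(2) by (auto simp: B_def char_fun_def)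
    qed
    then have "char_fun B \<in> cylinder (override_on (u k) (char_fun B) {..<n k}) (n (Suc k))"
      by (auto simp: cylinder_def override_on_def)
    moreover have "char_fun B \<in> (\<Union>j\<le>k. F j)"
      using j k(1) by blast
    ultimately show False
      using avoid by blast
  qed
  then show ?thesis
    using n by blast
qed

section \<open>Unconditional convergence\<close>

definition unconditionally_Cauchy :: "(nat \<Rightarrow> 'a::real_normed_vector) \<Rightarrow> bool" where
  "unconditionally_Cauchy x \<longleftrightarrow> (\<forall>e>0. \<exists>N. \<forall>F. finite F \<and> F \<subseteq> {N..} \<longrightarrow> norm (sum x F) < e)"

lemma not_unconditionally_Cauchy_iff:
  "\<not> unconditionally_Cauchy x \<longleftrightarrow> (\<exists>e>0. \<forall>N. \<exists>F. finite F \<and> F \<subseteq> {N..} \<and> e \<le> norm (sum x F))"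
  by (simp add: unconditionally_Cauchy_def not_less)

lemma unconditionally_Cauchy_imp_summable:
  fixes x :: "nat \<Rightarrow> 'a::banach"
  assumes "unconditionally_Cauchy x"
  shows "summable x"
  unfolding summable_Cauchy
proof (intro allI impI)
  fix e :: real
  assume "e > 0"
  then obtain N where N: "\<forall>F. finite F \<and> F \<subseteq> {N..} \<longrightarrow> norm (sum x F) < e"
    using assms unfolding unconditionally_Cauchy_def by blast
  then have "norm (sum x {m..<n}) < e" if "N \<le> m" for m n
    using that by (simp add: subset_eq)
  then show "\<exists>N. \<forall>m\<ge>N. \<forall>n. norm (sum x {m..<n}) < e"
    by blast
qed

lemma unconditionally_Cauchy_reindex:
  assumes "unconditionally_Cauchy x" "inj p"
  shows "unconditionally_Cauchy (x \<circ> p)"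
  unfolding unconditionally_Cauchy_def
proof (intro allI impI)
  fix e :: real
  assume "e > 0"
  then obtain N where N: "\<forall>F. finite F \<and> F \<subseteq> {N..} \<longrightarrow> norm (sum x F) < e"
    using assms(1) unfolding unconditionally_Cauchy_def by blast
  have "finite (p -` {..<N})"
    using assms(2) by (intro finite_vimageI) auto
  then obtain N' where N': "p -` {..<N} \<subseteq> {..<N'}"
    using finite_nat_bounded by blast
  have "norm (sum (x \<circ> p) F) < e" if "finite F" "F \<subseteq> {N'..}" for F
  proof -
    have "p ` F \<subseteq> {N..}"
      using that(2) N' by (force simp: not_le)
    then have "norm (sum x (p ` F)) < e"
      using N that(1) by simp
    then show ?thesis
      using assms(2) by (simp add: sum.reindex inj_on_subset)
  qed
  then show "\<exists>N. \<forall>F. finite F \<and> F \<subseteq> {N..} \<longrightarrow> norm (sum (x \<circ> p) F) < e"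
    by blast
qed

lemma unconditionally_Cauchy_signs:
  assumes "unconditionally_Cauchy x"
  shows "unconditionally_Cauchy (\<lambda>n. sgn_val (t n) *\<^sub>R x n)"
  unfolding unconditionally_Cauchy_def
proof (intro allI impI)
  fix e :: real
  assume "e > 0"
  then obtain N where N: "\<forall>F. finite F \<and> F \<subseteq> {N..} \<longrightarrow> norm (sum x F) < e / 2"
    using assms unfolding unconditionally_Cauchy_def by (meson half_gt_zero)
  have "norm (\<Sum>i\<in>F. sgn_val (t i) *\<^sub>R x i) < e" if "finite F" "F \<subseteq> {N..}" for F
  proof -
    have "(\<Sum>i\<in>F. sgn_val (t i) *\<^sub>R x i) = (\<Sum>i\<in>F. if t i then x i else - x i)"
      by (rule sum.cong) (simp_all add: sgn_val_def)
    also have "\<dots> = sum x (F \<inter> {i. t i}) + sum (\<lambda>i. - x i) (F \<inter> - {i. t i})"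
      by (rule sum.If_cases[OF that(1)])
    also have "\<dots> = sum x (F \<inter> {i. t i}) - sum x (F \<inter> - {i. t i})"
      by (simp add: sum_negf)
    finally have eq: "(\<Sum>i\<in>F. sgn_val (t i) *\<^sub>R x i) = sum x (F \<inter> {i. t i}) - sum x (F \<inter> - {i. t i})" .
    have "norm (sum x (F \<inter> {i. t i})) < e / 2" "norm (sum x (F \<inter> - {i. t i})) < e / 2"
      using N that by (simp_all add: subset_eq)
    then show ?thesis
      unfolding eq using norm_triangle_ineq4[of "sum x (F \<inter> {i. t i})" "sum x (F \<inter> - {i. t i})"]
      by linarith
  qed
  then show "\<exists>N. \<forall>F. finite F \<and> F \<subseteq> {N..} \<longrightarrow> norm (\<Sum>i\<in>F. sgn_val (t i) *\<^sub>R x i) < e"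
    by blast
qed

lemma unconditionally_Cauchy_imp_unconditionally_convergent:
  fixes x :: "nat \<Rightarrow> 'a::banach"
  assumes "unconditionally_Cauchy x"
  shows "unconditionally_convergent x"
  unfolding unconditionally_convergent_def
  using unconditionally_Cauchy_imp_summable[OF unconditionally_Cauchy_reindex[OF assms]]
  by (simp add: bij_is_inj o_def)

lemma bij_betw_interval_onto_prefix:
  assumes "F \<subseteq> {a..<b}"
  shows "\<exists>\<pi>. bij_betw \<pi> {a..<b} {a..<b} \<and> \<pi> ` {a..<a + card F} = F"
proof -
  have "finite F"
    using assms finite_subset by blast
  have "card F \<le> b - a"
    using card_mono[OF _ assms] by simp
  obtain \<pi>1 where \<pi>1: "bij_betw \<pi>1 {a..<a + card F} F"
    using finite_same_card_bij[of "{a..<a + card F}" F] \<open>finite F\<close> by auto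
  have "card ({a..<b} - F) = card {a + card F..<b}"
    using assms \<open>card F \<le> b - a\<close> by (simp add: card_Diff_subset \<open>finite F\<close>)
  then obtain \<pi>2 where \<pi>2: "bij_betw \<pi>2 {a + card F..<b} ({a..<b} - F)"
    using finite_same_card_bij[of "{a + card F..<b}" "{a..<b} - F"] by auto
  define \<pi> where "\<pi> i = (if i \<in> {a..<a + card F} then \<pi>1 i else \<pi>2 i)" for i
  have "bij_betw \<pi> ({a..<a + card F} \<union> {a + card F..<b}) (F \<union> ({a..<b} - F))"
    unfolding \<pi>_def by (rule bij_betw_disjoint_Un[OF \<pi>1 \<pi>2]) auto
  moreover have "{a..<a + card F} \<union> {a + card F..<b} = {a..<b}" "F \<union> ({a..<b} - F) = {a..<b}"
    using assms \<open>card F \<le> b - a\<close> by auto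
  moreover have "\<pi> ` {a..<a + card F} = F"
    using \<pi>1 by (simp add: \<pi>_def bij_betw_def)
  ultimately show ?thesis
    by metis
qed

lemma strict_mono_intervals_cover:
  fixes i :: nat
  assumes "strict_mono b" "b 0 = 0"
  shows "\<exists>k. i \<in> {b k..<b (Suc k)}"
proof (induction i)
  case 0
  have "b 0 < b (Suc 0)"
    using assms(1) by (rule strict_monoD) simp
  then show ?case
    using assms(2) by (intro exI[of _ 0]) simp
next
  case (Suc i)
  then obtain k where k: "i \<in> {b k..<b (Suc k)}"
    by blast
  show ?case
  proof (cases "Suc i < b (Suc k)")
    case True
    then show ?thesis
      using k by (intro exI[of _ k]) simp
  next
    case False
    then have "Suc i = b (Suc k)"
      using k by simp
    then show ?thesis
      using strict_monoD[OF assms(1), of "Suc k" "Suc (Suc k)"] by (intro exI[of _ "Suc k"]) simp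
  qed
qed

lemma bij_glue_intervals:
  fixes b :: "nat \<Rightarrow> nat"
  assumes b: "strict_mono b" "b 0 = 0"
    and \<pi>: "\<And>k. bij_betw (\<pi> k) {b k..<b (Suc k)} {b k..<b (Suc k)}"
  shows "\<exists>p. bij p \<and> (\<forall>k. \<forall>i\<in>{b k..<b (Suc k)}. p i = \<pi> k i)"
proof -
  define blk where "blk i = (THE k. i \<in> {b k..<b (Suc k)})" for i
  have blk: "blk i = k" if "i \<in> {b k..<b (Suc k)}" for i k
    unfolding blk_def using that strict_mono_interval_unique[OF b(1)] by blast
  define p where "p i = \<pi> (blk i) i" for i
  have p: "p i = \<pi> k i" if "i \<in> {b k..<b (Suc k)}" for i k
    using blk[OF that] by (simp add: p_def)
  have "bij_betw p (\<Union>k. {b k..<b (Suc k)}) (\<Union>k. {b k..<b (Suc k)})"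
  proof (rule bij_betw_UNION_disjoint)
    show "disjoint_family_on (\<lambda>k. {b k..<b (Suc k)}) UNIV"
      unfolding disjoint_family_on_def
    proof (intro ballI impI equals0I)
      fix k k' i
      assume "k \<noteq> k'" "i \<in> {b k..<b (Suc k)} \<inter> {b k'..<b (Suc k')}"
      then show False
        using strict_mono_interval_unique[OF b(1), of i k k'] by simp
    qed
    have "bij_betw p {b k..<b (Suc k)} {b k..<b (Suc k)} \<longleftrightarrow> bij_betw (\<pi> k) {b k..<b (Suc k)} {b k..<b (Suc k)}" for k
      by (rule bij_betw_cong) (rule p)
    then show "bij_betw p {b k..<b (Suc k)} {b k..<b (Suc k)}" for k
      using \<pi> by blast
  qed
  moreover have "(\<Union>k. {b k..<b (Suc k)}) = UNIV"
    using strict_mono_intervals_cover[OF b] by blast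
  ultimately show ?thesis
    using p by auto
qed

lemma exists_bij_onto_blocks:
  fixes b :: "nat \<Rightarrow> nat"
  assumes "strict_mono b" "b 0 = 0" "\<And>k. F k \<subseteq> {b k..<b (Suc k)}"
  shows "\<exists>p. bij p \<and> (\<forall>k. p ` {b k..<b k + card (F k)} = F k)"
proof -
  have "\<forall>k. \<exists>\<pi>. bij_betw \<pi> {b k..<b (Suc k)} {b k..<b (Suc k)} \<and> \<pi> ` {b k..<b k + card (F k)} = F k"
    using bij_betw_interval_onto_prefix[OF assms(3)] by blast
  then obtain \<pi> where \<pi>: "\<forall>k. bij_betw (\<pi> k) {b k..<b (Suc k)} {b k..<b (Suc k)} \<and>
      \<pi> k ` {b k..<b k + card (F k)} = F k"
    by (rule choice[THEN exE]) blast
  obtain p where p: "bij p" "\<And>k i. i \<in> {b k..<b (Suc k)} \<Longrightarrow> p i = \<pi> k i"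
    using bij_glue_intervals[OF assms(1,2), of \<pi>] \<pi> by auto
  have "p ` {b k..<b k + card (F k)} = F k" for k
  proof -
    have "{b k..<b k + card (F k)} \<subseteq> {b k..<b (Suc k)}"
      using card_mono[OF _ assms(3)[of k]] by auto
    then have "p ` {b k..<b k + card (F k)} = \<pi> k ` {b k..<b k + card (F k)}"
      using p(2) by (intro image_cong) auto
    then show ?thesis
      using \<pi> by simp
  qed
  then show ?thesis
    using p(1) by blast
qed

lemma unconditionally_convergent_imp_unconditionally_Cauchy:
  fixes x :: "nat \<Rightarrow> 'a::banach"
  assumes "unconditionally_convergent x"
  shows "unconditionally_Cauchy x"
proof (rule ccontr)
  assume "\<not> unconditionally_Cauchy x"
  then obtain e where e: "e > 0" "\<forall>N. \<exists>F. finite F \<and> F \<subseteq> {N..} \<and> e \<le> norm (sum x F)"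
    unfolding not_unconditionally_Cauchy_iff by blast
  then obtain Fs where Fs: "\<And>N. finite (Fs N)" "\<And>N. Fs N \<subseteq> {N..}" "\<And>N. e \<le> norm (sum x (Fs N))"
    by metis
  define b where "b = rec_nat 0 (\<lambda>_ a. Suc (Max (Fs a)))"
  have Fs_block: "Fs (b k) \<subseteq> {b k..<b (Suc k)}" for k
  proof
    fix i assume i: "i \<in> Fs (b k)"
    then have "b k \<le> i" "i \<le> Max (Fs (b k))"
      using Fs(1,2)[of "b k"] by auto
    then show "i \<in> {b k..<b (Suc k)}"
      by (simp add: b_def)
  qed
  moreover have "Fs N \<noteq> {}" for N
    using Fs(3)[of N] e(1) by auto
  ultimately have "b k < b (Suc k)" for k
    by (metis atLeastLessThan_empty_iff2 not_less subset_empty)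
  then have b: "strict_mono b"
    by (simp add: strict_mono_Suc_iff)
  then obtain p where p: "bij p" "\<And>k. p ` {b k..<b k + card (Fs (b k))} = Fs (b k)"
    using exists_bij_onto_blocks[OF b _ Fs_block] by (auto simp: b_def)
  have "summable (\<lambda>i. x (p i))"
    using assms p(1) unfolding unconditionally_convergent_def by blast
  then obtain N where N: "\<And>m n. N \<le> m \<Longrightarrow> norm (\<Sum>i=m..<n. x (p i)) < e"
    using e(1) unfolding summable_Cauchy by blast
  have "(\<Sum>i=b N..<b N + card (Fs (b N)). x (p i)) = sum x (Fs (b N))"
    using sum.reindex[of p "{b N..<b N + card (Fs (b N))}" x] inj_on_subset[OF bij_is_inj[OF p(1)]] p(2)
    by simp
  moreover have "N \<le> b N"
    using strict_mono_imp_increasing[OF b] .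
  ultimately show False
    using N[of "b N" "b N + card (Fs (b N))"] Fs(3)[of "b N"] by simp
qed

section \<open>Sign sequences with returning partial sums\<close>

lemma exists_sign_norm_ge:
  fixes a x :: "'a::real_normed_vector"
  shows "\<exists>\<sigma>. norm a \<le> norm (a + sgn_val \<sigma> *\<^sub>R x) \<and> norm x \<le> norm (a + sgn_val \<sigma> *\<^sub>R x)"
proof -
  have "2 * norm a \<le> norm (a + x) + norm (a - x)"
    using norm_triangle_ineq[of "a + x" "a - x"] by (simp add: scaleR_2[symmetric])
  moreover have "2 * norm x \<le> norm (a + x) + norm (a - x)"
    using norm_triangle_ineq4[of "a + x" "a - x"] by (simp add: scaleR_2[symmetric])
  ultimately show ?thesis
    by (cases "norm (a - x) \<le> norm (a + x)")
      (auto simp: sgn_val_def intro: exI[of _ True] exI[of _ False])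
qed

lemma exists_block_sign_far_from:
  fixes x :: "nat \<Rightarrow> 'a::real_normed_vector"
  assumes "finite P" "F \<subseteq> P"
  shows "\<exists>\<sigma>. norm (sum x F) \<le>
    norm ((\<Sum>j\<in>P. sgn_val (if j \<in> F then \<sigma> else t j) *\<^sub>R x j) - q)"
proof -
  define c where "c = (\<Sum>j\<in>P - F. sgn_val (t j) *\<^sub>R x j) - q"
  obtain \<sigma> where \<sigma>: "norm (sum x F) \<le> norm (c + sgn_val \<sigma> *\<^sub>R sum x F)"
    using exists_sign_norm_ge by blast
  let ?f = "\<lambda>j. sgn_val (if j \<in> F then \<sigma> else t j) *\<^sub>R x j"
  have "sum ?f P = sum ?f (P - F) + sum ?f F"
    by (rule sum.subset_diff[OF assms(2,1)])
  moreover have "sum ?f (P - F) = (\<Sum>j\<in>P - F. sgn_val (t j) *\<^sub>R x j)"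
    by (rule sum.cong) auto
  moreover have "sum ?f F = (\<Sum>j\<in>F. sgn_val \<sigma> *\<^sub>R x j)"
    by (rule sum.cong) auto
  ultimately have "(\<Sum>j\<in>P. sgn_val (if j \<in> F then \<sigma> else t j) *\<^sub>R x j) =
      (\<Sum>j\<in>P - F. sgn_val (t j) *\<^sub>R x j) + (\<Sum>j\<in>F. sgn_val \<sigma> *\<^sub>R x j)"
    by simp
  then have "(\<Sum>j\<in>P. sgn_val (if j \<in> F then \<sigma> else t j) *\<^sub>R x j) - q = c + sgn_val \<sigma> *\<^sub>R sum x F"
    by (simp add: c_def scaleR_sum_right)
  then show ?thesis
    using \<sigma> by metis
qed

lemma extend_signs_staying_far:
  fixes x :: "nat \<Rightarrow> 'a::real_normed_vector"
  assumes "P \<le> M" "e \<le> norm ((\<Sum>j<P. sgn_val (t j) *\<^sub>R x j) - q)"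
  shows "\<exists>t'. (\<forall>i<P. t' i = t i) \<and> (\<forall>i\<in>{P..M}. e \<le> norm ((\<Sum>j<i. sgn_val (t' j) *\<^sub>R x j) - q))"
  using assms(1)
proof (induction M rule: dec_induct)
  case base
  show ?case
    using assms(2) by (intro exI[of _ t]) simp
next
  case (step M)
  then obtain t' where t': "\<forall>i<P. t' i = t i" "\<forall>i\<in>{P..M}. e \<le> norm ((\<Sum>j<i. sgn_val (t' j) *\<^sub>R x j) - q)"
    by blast
  define a where "a = (\<Sum>j<M. sgn_val (t' j) *\<^sub>R x j) - q"
  obtain \<sigma> where \<sigma>: "norm a \<le> norm (a + sgn_val \<sigma> *\<^sub>R x M)"
    using exists_sign_norm_ge by blast
  define t'' where "t'' = t'(M := \<sigma>)"
  have partial: "(\<Sum>j<i. sgn_val (t'' j) *\<^sub>R x j) = (\<Sum>j<i. sgn_val (t' j) *\<^sub>R x j)" if "i \<le> M" for i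
    using that by (intro sum.cong) (auto simp: t''_def)
  have "e \<le> norm ((\<Sum>j<i. sgn_val (t'' j) *\<^sub>R x j) - q)" if "i \<in> {P..Suc M}" for i
  proof (cases "i = Suc M")
    case True
    have "(\<Sum>j<Suc M. sgn_val (t'' j) *\<^sub>R x j) - q = a + sgn_val \<sigma> *\<^sub>R x M"
      using partial[of M] by (simp add: a_def t''_def)
    moreover have "e \<le> norm a"
      using t'(2) step.hyps(1) by (simp add: a_def)
    ultimately show ?thesis
      using True \<sigma> by simp
  next
    case False
    then show ?thesis
      using that t'(2) partial[of i] by simp
  qed
  moreover have "\<forall>i<P. t'' i = t i"
    using t'(1) step.hyps(1) by (simp add: t''_def)
  ultimately show ?case
    by blast
qed

lemma exists_signs_partial_sum_far:
  fixes x :: "nat \<Rightarrow> 'a::real_normed_vector"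
  assumes "e > 0" and big: "\<And>N. \<exists>F. finite F \<and> F \<subseteq> {N..} \<and> e \<le> norm (sum x F)"
  shows "\<exists>t P. N \<le> P \<and> a < P \<and> (\<forall>i<N. t i = s i) \<and>
    e \<le> norm ((\<Sum>j<P. sgn_val (t j) *\<^sub>R x j) - (\<Sum>j\<le>a. sgn_val (t j) *\<^sub>R x j))"
proof -
  obtain F where F: "finite F" "F \<subseteq> {max N (Suc a)..}" "e \<le> norm (sum x F)"
    using big by blast
  then obtain i where "i \<in> F"
    using \<open>e > 0\<close> by fastforce
  define P where "P = Suc (Max F)"
  have "F \<subseteq> {..<P}"
    using F(1) by (auto simp: P_def less_Suc_eq_le)
  have "max N (Suc a) \<le> i"
    using F(2) \<open>i \<in> F\<close> by auto
  moreover have "i \<le> Max F"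
    using F(1) \<open>i \<in> F\<close> by simp
  ultimately have "max N (Suc a) < P"
    by (simp add: P_def)
  define t0 where "t0 i \<longleftrightarrow> i < N \<and> s i" for i
  define q where "q = (\<Sum>j\<le>a. sgn_val (t0 j) *\<^sub>R x j)"
  obtain \<sigma> where \<sigma>: "norm (sum x F) \<le> norm ((\<Sum>j<P. sgn_val (if j \<in> F then \<sigma> else t0 j) *\<^sub>R x j) - q)"
    using exists_block_sign_far_from[OF finite_lessThan \<open>F \<subseteq> {..<P}\<close>] by blast
  define t where "t j = (if j \<in> F then \<sigma> else t0 j)" for j
  have "t i = t0 i" if "i < max N (Suc a)" for i
    using that F(2) by (auto simp: t_def)
  then have "(\<forall>i<N. t i = s i) \<and> (\<Sum>j\<le>a. sgn_val (t j) *\<^sub>R x j) = q"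
    unfolding q_def by (auto simp: t0_def intro!: sum.cong)
  moreover have "e \<le> norm ((\<Sum>j<P. sgn_val (t j) *\<^sub>R x j) - q)"
    using F(3) \<sigma> by (simp add: t_def)
  ultimately show ?thesis
    using \<open>max N (Suc a) < P\<close> by (intro exI[of _ t] exI[of _ P]) auto
qed

definition returning_signs ::
    "(nat \<Rightarrow> 'a::real_normed_vector) \<Rightarrow> (nat \<Rightarrow> nat) \<Rightarrow> real \<Rightarrow> nat \<Rightarrow> nat \<Rightarrow> (nat \<Rightarrow> bool) set"
  where "returning_signs x n r a m = {t. \<forall>k\<ge>m. \<exists>j\<in>{n k..<n (Suc k)}.
      norm ((\<Sum>i\<le>j. sgn_val (t i) *\<^sub>R x i) - (\<Sum>i\<le>a. sgn_val (t i) *\<^sub>R x i)) \<le> r}"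

lemma nowhere_dense_returning_signs:
  fixes x :: "nat \<Rightarrow> 'a::real_normed_vector"
  assumes n: "strict_mono n" and "e > 0"
    and big: "\<And>N. \<exists>F. finite F \<and> F \<subseteq> {N..} \<and> e \<le> norm (sum x F)"
  shows "nowhere_dense (returning_signs x n (e / 2) a m)"
  unfolding nowhere_dense_cantor_iff
proof (intro allI)
  fix s N
  obtain t0 P where t0: "N \<le> P" "a < P" "\<forall>i<N. t0 i = s i"
    and far: "e \<le> norm ((\<Sum>j<P. sgn_val (t0 j) *\<^sub>R x j) - (\<Sum>j\<le>a. sgn_val (t0 j) *\<^sub>R x j))"
    using exists_signs_partial_sum_far[OF \<open>e > 0\<close> big] by blast
  define q where "q = (\<Sum>j\<le>a. sgn_val (t0 j) *\<^sub>R x j)"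
  define k where "k = max m P"
  have "P \<le> n k"
    using strict_mono_imp_increasing[OF n, of k] by (simp add: k_def)
  moreover have "n k < n (Suc k)"
    using n by (simp add: strict_mono_Suc_iff)
  ultimately have "\<exists>t. (\<forall>i<P. t i = t0 i) \<and>
      (\<forall>i\<in>{P..n (Suc k)}. e \<le> norm ((\<Sum>j<i. sgn_val (t j) *\<^sub>R x j) - q))"
    using far unfolding q_def by (intro extend_signs_staying_far) simp_all
  then obtain t where t: "\<forall>i<P. t i = t0 i"
    and stay_far: "\<forall>i\<in>{P..n (Suc k)}. e \<le> norm ((\<Sum>j<i. sgn_val (t j) *\<^sub>R x j) - q)"
    by blast
  have "cylinder t (n (Suc k)) \<inter> returning_signs x n (e / 2) a m = {}"
  proof (intro equals0I)
    fix g assume g: "g \<in> cylinder t (n (Suc k)) \<inter> returning_signs x n (e / 2) a m"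
    have "m \<le> k"
      by (simp add: k_def)
    then have "\<exists>j\<in>{n k..<n (Suc k)}.
        norm ((\<Sum>i\<le>j. sgn_val (g i) *\<^sub>R x i) - (\<Sum>i\<le>a. sgn_val (g i) *\<^sub>R x i)) \<le> e / 2"
      using g unfolding returning_signs_def by blast
    then obtain j where j: "j \<in> {n k..<n (Suc k)}"
      "norm ((\<Sum>i\<le>j. sgn_val (g i) *\<^sub>R x i) - (\<Sum>i\<le>a. sgn_val (g i) *\<^sub>R x i)) \<le> e / 2"
      by blast
    have "(\<Sum>i\<le>j. sgn_val (g i) *\<^sub>R x i) = (\<Sum>i<Suc j. sgn_val (t i) *\<^sub>R x i)"
      unfolding lessThan_Suc_atMost using g j(1) by (intro sum.cong) (auto simp: cylinder_def)
    moreover have "(\<Sum>i\<le>a. sgn_val (g i) *\<^sub>R x i) = q"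
      unfolding q_def using g t \<open>a < P\<close> \<open>P \<le> n k\<close> \<open>n k < n (Suc k)\<close>
      by (intro sum.cong) (auto simp: cylinder_def)
    moreover have "e \<le> norm ((\<Sum>i<Suc j. sgn_val (t i) *\<^sub>R x i) - q)"
    proof -
      have "Suc j \<in> {P..n (Suc k)}"
        using j(1) \<open>P \<le> n k\<close> by simp
      then show ?thesis
        using stay_far by blast
    qed
    ultimately show False
      using j(2) \<open>e > 0\<close> by simp
  qed
  moreover have "N < n (Suc k)" "\<forall>i<N. t i = s i"
    using t0 t \<open>P \<le> n k\<close> \<open>n k < n (Suc k)\<close> by auto
  ultimately show "\<exists>t M. N < M \<and> (\<forall>i<N. t i = s i) \<and> cylinder t M \<inter> returning_signs x n (e / 2) a m = {}"
    by blast
qed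

lemma I_convergent_imp_I_Cauchy:
  assumes "is_ideal I" "I_convergent I y L" "e > 0"
  shows "\<exists>a. {j. e < norm (y j - y a)} \<in> I"
proof -
  have A: "{j. e / 2 < norm (y j - L)} \<in> I"
    using assms(2) half_gt_zero[OF assms(3)] unfolding I_convergent_def by blast
  then obtain a where a: "norm (y a - L) \<le> e / 2"
    using ideal_UNIV[OF assms(1)] by (metis (mono_tags) UNIV_eq_I mem_Collect_eq not_less)
  have "{j. e < norm (y j - y a)} \<subseteq> {j. e / 2 < norm (y j - L)}"
  proof
    fix j assume "j \<in> {j. e < norm (y j - y a)}"
    moreover have "norm (y j - y a) \<le> norm (y j - L) + norm (y a - L)"
      using norm_triangle_ineq4[of "y j - L" "y a - L"] by simp
    ultimately show "j \<in> {j. e / 2 < norm (y j - L)}"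
      using a by simp
  qed
  then show ?thesis
    using ideal_subset[OF assms(1) A] by blast
qed

lemma summable_imp_I_series_convergent:
  fixes y :: "nat \<Rightarrow> 'a::real_normed_vector"
  assumes "is_ideal I" "summable y"
  shows "I_series_convergent I y"
proof -
  obtain L where "y sums L"
    using assms(2) by (auto simp: summable_def)
  then have lim: "(\<lambda>n. \<Sum>i\<le>n. y i) \<longlonglongrightarrow> L"
    by (simp add: sums_def_le)
  have "{n. e < norm ((\<Sum>i\<le>n. y i) - L)} \<in> I" if "e > 0" for e
  proof -
    obtain n0 where "\<forall>n\<ge>n0. norm ((\<Sum>i\<le>n. y i) - L) < e"
      using LIMSEQ_D[OF lim \<open>e > 0\<close>] by blast
    then have "{n. e < norm ((\<Sum>i\<le>n. y i) - L)} \<subseteq> {..<n0}"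
      by (auto simp: not_less[symmetric])
    then show ?thesis
      using ideal_subset[OF assms(1) ideal_finite[OF assms(1)]] by blast
  qed
  then show ?thesis
    unfolding I_series_convergent_def I_convergent_def by blast
qed

lemma B_set_meager:
  fixes x :: "nat \<Rightarrow> 'a::real_normed_vector"
  assumes I: "is_ideal I" and n: "strict_mono n"
    and no_block: "\<forall>A\<in>I. \<exists>m. \<forall>k\<ge>m. \<not> {n k..<n (Suc k)} \<subseteq> A"
    and "e > 0" and big: "\<And>N. \<exists>F. finite F \<and> F \<subseteq> {N..} \<and> e \<le> norm (sum x F)"
  shows "meager (B_set I x)"
proof -
  have "B_set I x \<subseteq> (\<Union>(a, m)\<in>UNIV. returning_signs x n (e / 2) a m)"
  proof
    fix t assume "t \<in> B_set I x"
    then obtain L where "I_convergent I (\<lambda>j. \<Sum>i\<le>j. sgn_val (t i) *\<^sub>R x i) L"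
      unfolding B_set_def I_series_convergent_def by blast
    then obtain a where
      "{j. e / 2 < norm ((\<Sum>i\<le>j. sgn_val (t i) *\<^sub>R x i) - (\<Sum>i\<le>a. sgn_val (t i) *\<^sub>R x i))} \<in> I"
      using I_convergent_imp_I_Cauchy[OF I _ half_gt_zero[OF \<open>e > 0\<close>]] by blast
    then obtain m where m: "\<forall>k\<ge>m. \<not> {n k..<n (Suc k)} \<subseteq>
        {j. e / 2 < norm ((\<Sum>i\<le>j. sgn_val (t i) *\<^sub>R x i) - (\<Sum>i\<le>a. sgn_val (t i) *\<^sub>R x i))}"
      using no_block by blast
    have "t \<in> returning_signs x n (e / 2) a m"
      unfolding returning_signs_def
    proof (intro CollectI allI impI)
      fix k assume "m \<le> k"
      then have "\<not> {n k..<n (Suc k)} \<subseteq>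
          {j. e / 2 < norm ((\<Sum>i\<le>j. sgn_val (t i) *\<^sub>R x i) - (\<Sum>i\<le>a. sgn_val (t i) *\<^sub>R x i))}"
        using m by blast
      then show "\<exists>j\<in>{n k..<n (Suc k)}.
          norm ((\<Sum>i\<le>j. sgn_val (t i) *\<^sub>R x i) - (\<Sum>i\<le>a. sgn_val (t i) *\<^sub>R x i)) \<le> e / 2"
        by (auto simp: not_less)
    qed
    then show "t \<in> (\<Union>(a, m)\<in>UNIV. returning_signs x n (e / 2) a m)"
      by blast
  qed
  moreover have "meager (\<Union>(a, m)\<in>UNIV. returning_signs x n (e / 2) a m)"
    using nowhere_dense_returning_signs[OF n \<open>e > 0\<close> big]
    by (intro meager_countable_UN) (auto intro: nowhere_dense_imp_meager)
  ultimately show ?thesis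
    using meager_subset by blast
qed

theorem corollary3p5:
  fixes I :: "nat set set" and x :: "nat \<Rightarrow> 'a::banach"
  assumes "is_ideal I"
    and "baire_property (char_fun ` I)"
  shows "unconditionally_convergent x \<longleftrightarrow> \<not> meager (B_set I x)"
proof
  assume "unconditionally_convergent x"
  then have "unconditionally_Cauchy x"
    by (rule unconditionally_convergent_imp_unconditionally_Cauchy)
  then have "B_set I x = UNIV"
    using summable_imp_I_series_convergent[OF assms(1)]
      unconditionally_Cauchy_imp_summable[OF unconditionally_Cauchy_signs]
    by (auto simp: B_set_def)
  then show "\<not> meager (B_set I x)"
    using compact_Hausdorff_not_meager_UNIV[OF cantor_space_compact_Hausdorff] by simp
next
  assume not_meager: "\<not> meager (B_set I x)"
  show "unconditionally_convergent x"
  proof (rule ccontr)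
    assume "\<not> unconditionally_convergent x"
    then have "\<not> unconditionally_Cauchy x"
      using unconditionally_Cauchy_imp_unconditionally_convergent by blast
    then obtain e where e: "e > 0" "\<And>N. \<exists>F. finite F \<and> F \<subseteq> {N..} \<and> e \<le> norm (sum x F)"
      unfolding not_unconditionally_Cauchy_iff by blast
    have hereditary: "B \<in> I" if "A \<in> I" "B \<subseteq> A" for A B
      using ideal_subset[OF assms(1)] that .
    obtain n where n: "strict_mono n" "\<forall>A\<in>I. \<exists>m. \<forall>k\<ge>m. \<not> {n k..<n (Suc k)} \<subseteq> A"
      using meager_hereditary_interval_partition[OF _ meager_ideal_if_baire_property[OF assms]] hereditary by blast
    have "meager (B_set I x)"
      using B_set_meager[OF assms(1) n e] .
    then show False
      using not_meager by contradiction
  qed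
qed

end
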